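(* Let $N\ge1$, let $\mathbf{K}\in\mathbb{R}^{N\times N}$ be the cyclic shift matrix ($(\mathbf{K}\mathbf{x})_1=x_N$, $(\mathbf{K}\mathbf{x})_i=x_{i-1}$ for $i\ge2$), $\mathbf{K}(\nu)=(1-\nu)\mathbf{I}+\nu\mathbf{K}$, $\mathbf{L}_h=N^2(\mathbf{K}+\mathbf{K}^T-2\mathbf{I})$, and for $\tilde\nu\in\mathbb{R}$ let $\mathcal{K}(\tilde\nu)=\mathbf{K}^{\lfloor\tilde\nu\rfloor}\mathbf{K}(\tilde\nu-\lfloor\tilde\nu\rfloor)$ (with $\mathbf{K}^{-1}=\mathbf{K}^T$). Let $\mathbf{A}\in\mathbb{R}^{N\times M}$ with columns $\mathbf{a}_1,\dots,\mathbf{a}_M$, let $\mathbf{b}\in\mathbb{R}^N$ (the pivot), let $\tilde\nu_j\in\operatorname{argmin}_{\tilde\omega\ge0}\|\mathbf{a}_j-\mathcal{K}(\tilde\omega)^T\mathbf{b}\|_2^2$ for $j=1,\dots,M$, and let $\mathring{\mathbf{A}}$ be the matrix whose $j$-th column is $\mathcal{K}(-\tilde\nu_j)\mathbf{a}_j$. If $\varphi$ is an eigenvector of $\mathring{\mathbf{A}}^T\mathring{\mathbf{A}}$ with eigenvalue $\lambda$, then for every $\tilde\nu\in\mathbb{R}$, $\varphi$ is also an eigenvector of $(\mathcal{K}(\tilde\nu)\mathring{\mathbf{A}})^T(\mathcal{K}(\tilde\nu)\mathring{\mathbf{A}})$ with the same eigenvalue $\lambda$, up to $\mathcal{O}(1/N^2)$;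 that is, $(\mathcal{K}(\tilde\nu)\mathring{\mathbf{A}})^T(\mathcal{K}(\tilde\nu)\mathring{\mathbf{A}})\varphi=\lambda\varphi+\frac{1}{N^2}\mathring{\mathbf{A}}^T\mathbf{C}\mathring{\mathbf{A}}\varphi$ where $\mathbf{C}$ is a scalar multiple of $\mathbf{L}_h$.
   Context: Convention: a matrix term $\frac1{N^2}\mathbf{C}$ with $\mathbf{C}$ a multiple of the discrete Laplacian $\mathbf{L}_h$ is regarded as $\mathcal{O}(1/N^2)$ (it is of that size when acting on grid discretizations of twice differentiable functions). *)

theory Defs
  imports Complex_Main "Jordan_Normal_Form.Char_Poly"
begin

text \<open>Matrices are Jordan_Normal_Form matrices; indices are 0-based, so
  row/column i of the paper is index i-1 here.\<close>

text \<open>Cyclic shift K: (K x)_0 = x_(N-1), (K x)_i = x_(i-1).\<close>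
definition shift_mat :: "nat \<Rightarrow> real mat" where
  "shift_mat N = mat N N (\<lambda>(i,j). if i = (j + 1) mod N then 1 else 0)"

definition shift_nu :: "nat \<Rightarrow> real \<Rightarrow> real mat" where
  "shift_nu N \<nu> = (1 - \<nu>) \<cdot>\<^sub>m 1\<^sub>m N + \<nu> \<cdot>\<^sub>m shift_mat N"

definition lap_h :: "nat \<Rightarrow> real mat" where
  "lap_h N = (real N)^2 \<cdot>\<^sub>m (shift_mat N + transpose_mat (shift_mat N) - 2 \<cdot>\<^sub>m 1\<^sub>m N)"

definition shift_ipow :: "nat \<Rightarrow> int \<Rightarrow> real mat" where
  "shift_ipow N k = (if k \<ge> 0 then shift_mat N ^\<^sub>m nat k
                     else transpose_mat (shift_mat N) ^\<^sub>m nat (- k))"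

definition shift_gen :: "nat \<Rightarrow> real \<Rightarrow> real mat" where
  "shift_gen N \<nu> = shift_ipow N \<lfloor>\<nu>\<rfloor> * shift_nu N (\<nu> - of_int \<lfloor>\<nu>\<rfloor>)"

definition sq_norm2 :: "real vec \<Rightarrow> real" where
  "sq_norm2 v = (\<Sum>i<dim_vec v. (v $ i)^2)"

definition aligned_mat :: "nat \<Rightarrow> nat \<Rightarrow> real mat \<Rightarrow> (nat \<Rightarrow> real) \<Rightarrow> real mat" where
  "aligned_mat N M A nu = mat N M (\<lambda>(i,j). (shift_gen N (- nu j) *\<^sub>v col A j) $ i)"

end

theory Submission imports Defs begin

text \<open>The generalised shift is \<open>K\<^sup>k K(\<theta>)\<close> with \<open>k = \<lfloor>\<nu>\<rfloor>\<close> and \<open>\<theta> = \<nu> - k\<close>. The factor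
  \<open>K\<^sup>k\<close> is orthogonal, so only \<open>K(\<theta>) = (1 - \<theta>) I + \<theta> K\<close> changes Gram matrices, and since
  \<open>K\<^sup>T K = I\<close> expanding gives \<open>K(\<theta>)\<^sup>T K(\<theta>) = I + \<theta>(1 - \<theta>)(K + K\<^sup>T - 2I) = I + \<theta>(1 - \<theta>)/N\<^sup>2 L\<^sub>h\<close>.
  Hence \<open>(K\<^sup>k K(\<theta>) B)\<^sup>T (K\<^sup>k K(\<theta>) B) = B\<^sup>T B + \<theta>(1 - \<theta>)/N\<^sup>2 B\<^sup>T L\<^sub>h B\<close> for every matrix \<open>B\<close>
  with \<open>N\<close> rows; applied to the aligned matrix and an eigenvector of its Gram matrix this is
  the claim with \<open>C = \<theta>(1 - \<theta>) L\<^sub>h\<close>.\<close>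

lemma gram_mult:
  fixes Q P :: "'a :: comm_ring_1 mat"
  assumes Q: "Q \<in> carrier_mat n n" and P: "P \<in> carrier_mat n m"
  shows "transpose_mat (Q * P) * (Q * P) = transpose_mat P * (transpose_mat Q * Q) * P"
proof -
  have QT: "transpose_mat Q \<in> carrier_mat n n" and PT: "transpose_mat P \<in> carrier_mat m n"
    using Q P by simp_all
  have "transpose_mat (Q * P) * (Q * P) = transpose_mat P * (transpose_mat Q * (Q * P))"
    using assoc_mult_mat[OF PT QT mult_carrier_mat[OF Q P]] by (simp add: transpose_mult[OF Q P])
  also have "\<dots> = transpose_mat P * (transpose_mat Q * Q) * P"
    using Q P QT PT by (simp add: assoc_mult_mat[of _ m n _ n _ m])
  finally show ?thesis .
qed

lemma gram_mult_orthogonal: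
  fixes Q P :: "'a :: comm_ring_1 mat"
  assumes Q: "Q \<in> carrier_mat n n" and P: "P \<in> carrier_mat n m"
    and orth: "transpose_mat Q * Q = 1\<^sub>m n"
  shows "transpose_mat (Q * P) * (Q * P) = transpose_mat P * P"
  using gram_mult[OF Q P] P by (simp add: orth)

lemma orthogonal_pow_mat:
  fixes Q :: "'a :: comm_ring_1 mat"
  assumes Q: "Q \<in> carrier_mat n n" and orth: "transpose_mat Q * Q = 1\<^sub>m n"
  shows "transpose_mat (Q ^\<^sub>m k) * Q ^\<^sub>m k = 1\<^sub>m n"
proof (induction k)
  case 0
  show ?case using Q by simp
next
  case (Suc k)
  then show ?case
    using gram_mult_orthogonal[OF pow_carrier_mat[OF Q] Q] by (simp add: orth)
qed

lemma smult_mult_smult_mat: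
  fixes A B :: "'a :: comm_ring mat"
  assumes "A \<in> carrier_mat nr n" and "B \<in> carrier_mat n nc"
  shows "(a \<cdot>\<^sub>m A) * (b \<cdot>\<^sub>m B) = (a * b) \<cdot>\<^sub>m (A * B)"
  using assms by (intro eq_matI) (auto simp: scalar_prod_def sum_distrib_left ac_simps)

lemma gram_convex_comb_orthogonal:
  fixes K :: "'a :: comm_ring_1 mat"
  assumes K: "K \<in> carrier_mat n n" and orth: "transpose_mat K * K = 1\<^sub>m n"
  shows "transpose_mat ((1 - t) \<cdot>\<^sub>m 1\<^sub>m n + t \<cdot>\<^sub>m K) * ((1 - t) \<cdot>\<^sub>m 1\<^sub>m n + t \<cdot>\<^sub>m K)
    = 1\<^sub>m n + (t * (1 - t)) \<cdot>\<^sub>m (K + transpose_mat K - 2 \<cdot>\<^sub>m 1\<^sub>m n)"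
proof -
  define S where "S = (1 - t) \<cdot>\<^sub>m 1\<^sub>m n + t \<cdot>\<^sub>m K"
  have KT: "transpose_mat K \<in> carrier_mat n n" using K by simp
  have "transpose_mat S = (1 - t) \<cdot>\<^sub>m 1\<^sub>m n + t \<cdot>\<^sub>m transpose_mat K"
    unfolding S_def using K by (intro eq_matI) auto
  then have "transpose_mat S * S
      = ((1 - t) * (1 - t)) \<cdot>\<^sub>m 1\<^sub>m n + (t * (1 - t)) \<cdot>\<^sub>m transpose_mat K
        + (((1 - t) * t) \<cdot>\<^sub>m K + (t * t) \<cdot>\<^sub>m (transpose_mat K * K))"
    unfolding S_def using K KT
    by (simp add: add_mult_distrib_mat[of _ n n _ _ n] mult_add_distrib_mat[of _ n n _ n]
        smult_mult_smult_mat[of _ n n _ n])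
  also have "\<dots> = 1\<^sub>m n + (t * (1 - t)) \<cdot>\<^sub>m (K + transpose_mat K - 2 \<cdot>\<^sub>m 1\<^sub>m n)"
    unfolding orth using K by (intro eq_matI) (auto simp: algebra_simps)
  finally show ?thesis unfolding S_def .
qed

lemma shift_mat_carrier [simp]: "shift_mat N \<in> carrier_mat N N"
  by (simp add: shift_mat_def)

lemma transpose_shift_mult_shift: "transpose_mat (shift_mat N) * shift_mat N = 1\<^sub>m N"
proof (rule eq_matI)
  fix i j assume "i < dim_row (1\<^sub>m N)" and "j < dim_col (1\<^sub>m N)"
  then have ij: "i < N" "j < N" by auto
  have "(transpose_mat (shift_mat N) * shift_mat N) $$ (i, j)
      = (\<Sum>k<N. (if k = Suc i mod N then 1 else 0) * (if k = Suc j mod N then 1 else (0::real)))"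
    using ij by (simp add: shift_mat_def scalar_prod_def lessThan_atLeast0)
  also have "\<dots> = (if Suc i mod N = Suc j mod N then 1 else 0)"
    using ij by (simp add: if_distrib[of "\<lambda>x. x * _"] sum.delta cong: if_cong)
  also have "\<dots> = 1\<^sub>m N $$ (i, j)"
    using ij by (auto simp: mod_Suc split: if_splits)
  finally show "(transpose_mat (shift_mat N) * shift_mat N) $$ (i, j) = 1\<^sub>m N $$ (i, j)" .
qed (auto simp: shift_mat_def)

lemma shift_mult_transpose_shift: "shift_mat N * transpose_mat (shift_mat N) = 1\<^sub>m N"
  by (rule mat_mult_left_right_inverse[OF _ _ transpose_shift_mult_shift]) auto

lemma shift_ipow_carrier: "shift_ipow N k \<in> carrier_mat N N"
  by (simp add: shift_ipow_def)

lemma transpose_shift_ipow_mult_shift_ipow: "transpose_mat (shift_ipow N k) * shift_ipow N k = 1\<^sub>m N"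
  using orthogonal_pow_mat[OF shift_mat_carrier transpose_shift_mult_shift]
    orthogonal_pow_mat[of "transpose_mat (shift_mat N)"] shift_mult_transpose_shift
  by (simp add: shift_ipow_def)

lemma shift_gen_carrier: "shift_gen N \<nu> \<in> carrier_mat N N"
  unfolding shift_gen_def shift_nu_def by (simp add: mult_carrier_mat[OF shift_ipow_carrier])

lemma gram_shift_gen:
  fixes \<nu> :: real
  defines "\<theta> \<equiv> \<nu> - of_int \<lfloor>\<nu>\<rfloor>"
  shows "transpose_mat (shift_gen N \<nu>) * shift_gen N \<nu>
    = 1\<^sub>m N + (\<theta> * (1 - \<theta>)) \<cdot>\<^sub>m (shift_mat N + transpose_mat (shift_mat N) - 2 \<cdot>\<^sub>m 1\<^sub>m N)"
proof -
  have "shift_nu N \<theta> \<in> carrier_mat N N" by (simp add: shift_nu_def)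
  then have "transpose_mat (shift_gen N \<nu>) * shift_gen N \<nu>
      = transpose_mat (shift_nu N \<theta>) * shift_nu N \<theta>"
    unfolding shift_gen_def \<theta>_def
    by (rule gram_mult_orthogonal[OF shift_ipow_carrier _ transpose_shift_ipow_mult_shift_ipow])
  then show ?thesis
    unfolding shift_nu_def
    using gram_convex_comb_orthogonal[OF shift_mat_carrier transpose_shift_mult_shift] by simp
qed

lemma smult_mat_mult_vec:
  fixes A :: "'a :: comm_ring mat"
  assumes "A \<in> carrier_mat nr nc" and "v \<in> carrier_vec nc"
  shows "(k \<cdot>\<^sub>m A) *\<^sub>v v = k \<cdot>\<^sub>v (A *\<^sub>v v)"
  using assms by (intro eq_vecI) (auto simp: scalar_prod_def sum_distrib_left mult.assoc)

lemma mult_smult_mult_mat: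
  fixes P X Q :: "'a :: comm_ring mat"
  assumes "P \<in> carrier_mat m n" and "X \<in> carrier_mat n n" and "Q \<in> carrier_mat n k"
  shows "P * (c \<cdot>\<^sub>m X) * Q = c \<cdot>\<^sub>m (P * X * Q)"
  using assms by (simp add: mult_smult_distrib mult_smult_assoc_mat[of _ m n])

lemma gram_mult_mat_vec_perturbed:
  fixes G B X :: "'a :: comm_ring_1 mat"
  assumes G: "G \<in> carrier_mat n n" and B: "B \<in> carrier_mat n m" and X: "X \<in> carrier_mat n n"
    and v: "v \<in> carrier_vec m" and gram: "transpose_mat G * G = 1\<^sub>m n + c \<cdot>\<^sub>m X"
  shows "(transpose_mat (G * B) * (G * B)) *\<^sub>v v
    = (transpose_mat B * B) *\<^sub>v v + c \<cdot>\<^sub>v ((transpose_mat B * X * B) *\<^sub>v v)"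
proof -
  have BT: "transpose_mat B \<in> carrier_mat m n" using B by simp
  have "transpose_mat (G * B) * (G * B) = transpose_mat B * B + c \<cdot>\<^sub>m (transpose_mat B * X * B)"
    using B BT X
    by (simp add: gram_mult[OF G B] gram mult_add_distrib_mat[of _ m n _ n] add_mult_distrib_mat[of _ m n]
        mult_smult_distrib[of _ m n] mult_smult_assoc_mat[of _ m n])
  then show ?thesis
    using B BT X v
    by (simp add: add_mult_distrib_mat_vec[of _ m m] smult_mat_mult_vec[of _ m m])
qed

theorem proposition3p1:
  fixes N M :: nat and A :: "real mat" and b :: "real vec"
    and nu :: "nat \<Rightarrow> real" and \<phi> :: "real vec" and lam :: real
  assumes "N \<ge> 1"
    and "A \<in> carrier_mat N M"
    and "b \<in> carrier_vec N"
    and "\<forall>j<M. nu j \<ge> 0 \<and>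
           (\<forall>\<omega>\<ge>0. sq_norm2 (col A j - transpose_mat (shift_gen N (nu j)) *\<^sub>v b)
                   \<le> sq_norm2 (col A j - transpose_mat (shift_gen N \<omega>) *\<^sub>v b))"
    and "eigenvector (transpose_mat (aligned_mat N M A nu) * aligned_mat N M A nu) \<phi> lam"
  shows "\<forall>\<nu>::real. \<exists>c::real.
           (transpose_mat (shift_gen N \<nu> * aligned_mat N M A nu)
              * (shift_gen N \<nu> * aligned_mat N M A nu)) *\<^sub>v \<phi>
           = lam \<cdot>\<^sub>v \<phi> + (1 / (real N)^2) \<cdot>\<^sub>v
               ((transpose_mat (aligned_mat N M A nu) * (c \<cdot>\<^sub>m lap_h N) * aligned_mat N M A nu) *\<^sub>v \<phi>)"
proof
  fix \<nu> :: real
  define B where "B = aligned_mat N M A nu"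
  define X where "X = shift_mat N + transpose_mat (shift_mat N) - 2 \<cdot>\<^sub>m 1\<^sub>m N"
  define c where "c = (\<nu> - of_int \<lfloor>\<nu>\<rfloor>) * (1 - (\<nu> - of_int \<lfloor>\<nu>\<rfloor>))"
  have B: "B \<in> carrier_mat N M" by (simp add: B_def aligned_mat_def)
  have X: "X \<in> carrier_mat N N" unfolding X_def by (rule minus_carrier_mat) simp
  from \<open>eigenvector _ \<phi> lam\<close> B have \<phi>: "\<phi> \<in> carrier_vec M"
    and eigen: "(transpose_mat B * B) *\<^sub>v \<phi> = lam \<cdot>\<^sub>v \<phi>"
    unfolding eigenvector_def B_def by auto
  have "(transpose_mat (shift_gen N \<nu> * B) * (shift_gen N \<nu> * B)) *\<^sub>v \<phi>
      = lam \<cdot>\<^sub>v \<phi> + c \<cdot>\<^sub>v ((transpose_mat B * X * B) *\<^sub>v \<phi>)"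
    using gram_mult_mat_vec_perturbed[OF shift_gen_carrier B X \<phi>] gram_shift_gen
    by (simp add: eigen X_def c_def)
  also have "c \<cdot>\<^sub>v ((transpose_mat B * X * B) *\<^sub>v \<phi>)
      = (1 / (real N)^2) \<cdot>\<^sub>v ((transpose_mat B * (c \<cdot>\<^sub>m lap_h N) * B) *\<^sub>v \<phi>)"
  proof -
    have "c \<cdot>\<^sub>m lap_h N = (c * (real N)^2) \<cdot>\<^sub>m X"
      unfolding lap_h_def X_def by (intro eq_matI) auto
    then show ?thesis
      using \<open>N \<ge> 1\<close> B X \<phi>
      by (simp add: mult_smult_mult_mat[of _ M N] smult_mat_mult_vec[of _ M M] smult_smult_assoc)
  qed
  finally show "\<exists>c. (transpose_mat (shift_gen N \<nu> * aligned_mat N M A nu)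
              * (shift_gen N \<nu> * aligned_mat N M A nu)) *\<^sub>v \<phi>
           = lam \<cdot>\<^sub>v \<phi> + (1 / (real N)^2) \<cdot>\<^sub>v
               ((transpose_mat (aligned_mat N M A nu) * (c \<cdot>\<^sub>m lap_h N) * aligned_mat N M A nu) *\<^sub>v \<phi>)"
    unfolding B_def by blast
qed

end
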